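(* Let $m\ge 2$ and $n\ge 1$. In any $m\times n$ maximal configuration resistant to predators, the number of occupied lots in row $m-1$ (the penultimate row) is at most $2\lceil n/3\rceil$.
   Context: An $m\times n$ configuration is a $0$-$1$ matrix $C=(C_{i,j})$, $1\le i\le m$, $1\le j\le n$; $C_{i,j}=1$ means lot $(i,j)$ is occupied by a house. Row $1$ is the northernmost and row $m$ the southernmost; column $1$ is westernmost and column $n$ easternmost. A house at $(i,j)$ is blocked from sunlight if the three lots $(i,j-1)$, $(i,j+1)$, $(i+1,j)$ all lie inside the grid and are all occupied (lots outside the grid never obstruct sunlight). $C$ is permissible if no house is blocked, and maximal if it is permissible and setting any single empty lot to $1$ yields a non-permissible configuration. A maximal configuration is resistant to predators if, for every empty lot, putting a house on it (alone) results in that new house being blocked. *)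

theory Defs
  imports Complex_Main
begin

text \<open>An m x n configuration is modelled as a predicate C :: nat => nat => bool;
  C i j means lot (i,j) is occupied. Only lots with 1 <= i <= m, 1 <= j <= n matter.\<close>

type_synonym config = "nat \<Rightarrow> nat \<Rightarrow> bool"

definition in_grid :: "nat \<Rightarrow> nat \<Rightarrow> nat \<Rightarrow> nat \<Rightarrow> bool" where
  "in_grid m n i j \<longleftrightarrow> 1 \<le> i \<and> i \<le> m \<and> 1 \<le> j \<and> j \<le> n"

definition blocked :: "nat \<Rightarrow> nat \<Rightarrow> config \<Rightarrow> nat \<Rightarrow> nat \<Rightarrow> bool" where
  "blocked m n C i j \<longleftrightarrow>
     in_grid m n i (j - 1) \<and> 2 \<le> j \<and> in_grid m n i (j + 1) \<and> in_grid m n (i + 1) j \<and>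
     C i (j - 1) \<and> C i (j + 1) \<and> C (i + 1) j"

definition permissible :: "nat \<Rightarrow> nat \<Rightarrow> config \<Rightarrow> bool" where
  "permissible m n C \<longleftrightarrow> (\<forall>i j. in_grid m n i j \<and> C i j \<longrightarrow> \<not> blocked m n C i j)"

definition maximal :: "nat \<Rightarrow> nat \<Rightarrow> config \<Rightarrow> bool" where
  "maximal m n C \<longleftrightarrow> permissible m n C \<and>
     (\<forall>i j. in_grid m n i j \<and> \<not> C i j \<longrightarrow> \<not> permissible m n (C(i := (C i)(j := True))))"

definition resistant :: "nat \<Rightarrow> nat \<Rightarrow> config \<Rightarrow> bool" where
  "resistant m n C \<longleftrightarrow> maximal m n C \<and>
     (\<forall>i j. in_grid m n i j \<and> \<not> C i j \<longrightarrow> blocked m n (C(i := (C i)(j := True))) i j)"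

end

theory Submission
  imports Defs
begin

(* A house in the bottom row has no southern neighbour and so can never be blocked; resistance
   therefore forces the bottom row to be full. A full bottom row means that three consecutive
   houses in row m-1 would block the middle one, so row m-1 contains no three consecutive houses,
   and such a row of length n has at most two houses in each block of three lots. *)

lemma card_no_three_consecutive:
  fixes P :: "nat \<Rightarrow> bool"
  assumes "\<And>j. 1 \<le> j \<Longrightarrow> j + 2 \<le> n \<Longrightarrow> \<not> (P j \<and> P (j + 1) \<and> P (j + 2))"
  shows "card {j \<in> {1..n}. P j} \<le> 2 * ((n + 2) div 3)"
  using assms
proof (induction n rule: less_induct)
  case (less n)
  show ?case
  proof (cases "n < 3")
    case True
    have "card {j \<in> {1..n}. P j} \<le> card {1..n}" by (rule card_mono) auto
    with True show ?thesis by simp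
  next
    case False
    then obtain k where k: "n = k + 3" by (metis add.commute le_Suc_ex not_less)
    have split: "{j \<in> {1..n}. P j} = {j \<in> {1..k}. P j} \<union> {j \<in> {k + 1..k + 3}. P j}"
      using k by auto
    have "card {j \<in> {1..k}. P j} \<le> 2 * ((k + 2) div 3)"
      using less k by simp
    moreover have "card {j \<in> {k + 1..k + 3}. P j} \<le> 2"
    proof -
      have "\<not> (P (k + 1) \<and> P (k + 2) \<and> P (k + 3))"
        using less.prems[of "k + 1"] k by (simp add: numeral_3_eq_3)
      then have "{j \<in> {k + 1..k + 3}. P j} \<subseteq> {k + 2, k + 3} \<or>
                 {j \<in> {k + 1..k + 3}. P j} \<subseteq> {k + 1, k + 3} \<or>
                 {j \<in> {k + 1..k + 3}. P j} \<subseteq> {k + 1, k + 2}"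
        by (auto simp: numeral_3_eq_3 le_Suc_eq)
      moreover have "card A \<le> 2" if "A \<subseteq> {a, b}" for A and a b :: nat
        using card_mono[OF _ that] by (cases "a = b") auto
      ultimately show ?thesis by (elim disjE) blast+
    qed
    moreover have "card {j \<in> {1..n}. P j}
        \<le> card {j \<in> {1..k}. P j} + card {j \<in> {k + 1..k + 3}. P j}"
      unfolding split by (rule card_Un_le)
    moreover have "(n + 2) div 3 = (k + 2) div 3 + 1" using k by simp
    ultimately show ?thesis by linarith
  qed
qed

lemma ceiling_nat_divide_3: "\<lceil>real n / 3\<rceil> = int ((n + 2) div 3)"
proof (rule ceiling_unique)
  have "3 * ((n + 2) div 3) \<le> n + 2" "n \<le> 3 * ((n + 2) div 3)" by linarith+
  then show "real_of_int (int ((n + 2) div 3)) - 1 < real n / 3"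
    and "real n / 3 \<le> real_of_int (int ((n + 2) div 3))" by linarith+
qed

lemma resistant_bottom_row_full:
  assumes "resistant m n C" and "1 \<le> m" and "1 \<le> j" and "j \<le> n"
  shows "C m j"
proof (rule ccontr)
  assume "\<not> C m j"
  with assms have "blocked m n (C(m := (C m)(j := True))) m j"
    unfolding resistant_def in_grid_def by auto
  then show False unfolding blocked_def in_grid_def by simp
qed

lemma permissible_no_three_consecutive_above_full_row:
  assumes "permissible m n C" and "1 \<le> i" and "i + 1 \<le> m"
    and full: "\<And>j. 1 \<le> j \<Longrightarrow> j \<le> n \<Longrightarrow> C (i + 1) j"
    and "1 \<le> j" and "j + 2 \<le> n"
  shows "\<not> (C i j \<and> C i (j + 1) \<and> C i (j + 2))"
proof
  assume houses: "C i j \<and> C i (j + 1) \<and> C i (j + 2)"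
  with assms full[of "j + 1"] have "blocked m n C i (j + 1)"
    unfolding blocked_def in_grid_def by (auto simp: add.assoc)
  moreover have "in_grid m n i (j + 1)" using assms unfolding in_grid_def by auto
  ultimately show False using assms(1) houses unfolding permissible_def by blast
qed

theorem mainTheorem7:
  fixes m n :: nat and C :: config
  assumes "m \<ge> 2" and "n \<ge> 1"
    and "resistant m n C"
  shows "real (card {j \<in> {1..n}. C (m - 1) j}) \<le> 2 * of_int \<lceil>real n / 3\<rceil>"
proof -
  have "permissible m n C" using assms(3) unfolding resistant_def maximal_def by simp
  moreover have "C (m - 1 + 1) j" if "1 \<le> j" "j \<le> n" for j
    using resistant_bottom_row_full[OF assms(3)] assms(1) that by simp
  ultimately have "\<not> (C (m - 1) j \<and> C (m - 1) (j + 1) \<and> C (m - 1) (j + 2))"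
    if "1 \<le> j" "j + 2 \<le> n" for j
    using permissible_no_three_consecutive_above_full_row[of m n C "m - 1" j] assms(1) that
    by simp
  then have "card {j \<in> {1..n}. C (m - 1) j} \<le> 2 * ((n + 2) div 3)"
    by (rule card_no_three_consecutive)
  then show ?thesis unfolding ceiling_nat_divide_3 by simp
qed

end
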